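(* Let $(G,M,I)$ be a finite total formal context and let $\mathcal S$ be its Dowker sheaf on $D(G,M,I)$. Then the zeroth cellular sheaf cohomology of $\mathcal S$ decomposes as $$H^0(\mathcal S)\cong\bigoplus_{\sigma\in D(G,M,I)}\operatorname{span}\widehat{M_\sigma},$$ so in particular $\dim H^0(\mathcal S)=|M|$, and $H^k(\mathcal S)=0$ for all $k>0$.
   Context: A formal context is a triple $(G,M,I)$ with $I\subseteq G\times M$; write $gIm$ for $(g,m)\in I$; for $A\subseteq G$, $A'=\{m: gIm\ \forall g\in A\}$, for $B\subseteq M$, $B'=\{g: gIm\ \forall m\in B\}$, $m'=\{m\}'$. It is total if $g'\ne\emptyset$ for all $g\in G$ and $m'\neq\emptyset$ for all $m\in M$. The Dowker complex $D(G,M,I)$ is the abstract simplicial complex on $G$ whose simplices are the nonempty $\sigma\subseteq G$ with $\sigma'\ne\emptyset$. For a simplex $\sigma$, $\widehat{M_\sigma}=\{m\in M: gIm \text{ iff } g\in\sigma\}=\{m: m'=\sigma\}$. The Dowker sheaf $\mathcal S$ assigns to each simplex $\sigma$ the real vector space $\mathcal S(\sigma)$ with basis $\sigma'$, and for $\sigma\subseteq\tau$ the restriction $\mathcal S(\sigma\subseteq\tau):\mathcal S(\sigma)\to\mathcal S(\tau)$ is the projection sending a basis element $m$ to $m$ if $m\in\tau'$ and to $0$ otherwise. Fix a linear order on $G$; for a $k$-simplex $\tau=\{g_0<\dots<g_k\}$ let $\tau_i=\tau\setminus\{g_i\}$. Cellular sheaf cohomology is the cohomology of the cochain complex $C^k=\bigoplus_{\dim\sigma=k}\mathcal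 S(\sigma)$ with $(d^k\delta)(\tau)=\sum_{i=0}^{k+1}(-1)^i\,\mathcal S(\tau_i\subseteq\tau)(\delta(\tau_i))$ for $(k+1)$-simplices $\tau$. *)

theory Defs
  imports "HOL-Analysis.Analysis" "HOL-Library.Function_Algebras"
begin

definition intent :: "'g set \<Rightarrow> 'm set \<Rightarrow> ('g \<times> 'm) set \<Rightarrow> 'g set \<Rightarrow> 'm set" where
  "intent G M I A = {m \<in> M. \<forall>g\<in>A. (g, m) \<in> I}"

definition extent :: "'g set \<Rightarrow> 'm set \<Rightarrow> ('g \<times> 'm) set \<Rightarrow> 'm set \<Rightarrow> 'g set" where
  "extent G M I B = {g \<in> G. \<forall>m\<in>B. (g, m) \<in> I}"

definition total_context :: "'g set \<Rightarrow> 'm set \<Rightarrow> ('g \<times> 'm) set \<Rightarrow> bool" where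
  "total_context G M I \<longleftrightarrow>
     (\<forall>g\<in>G. intent G M I {g} \<noteq> {}) \<and> (\<forall>m\<in>M. extent G M I {m} \<noteq> {})"

definition dowker :: "'g set \<Rightarrow> 'm set \<Rightarrow> ('g \<times> 'm) set \<Rightarrow> 'g set set" where
  "dowker G M I = {\<sigma>. \<sigma> \<noteq> {} \<and> \<sigma> \<subseteq> G \<and> intent G M I \<sigma> \<noteq> {}}"

definition simplices :: "'g set \<Rightarrow> 'm set \<Rightarrow> ('g \<times> 'm) set \<Rightarrow> nat \<Rightarrow> 'g set set" where
  "simplices G M I k = {\<sigma> \<in> dowker G M I. card \<sigma> = Suc k}"

definition hatM :: "'g set \<Rightarrow> 'm set \<Rightarrow> ('g \<times> 'm) set \<Rightarrow> 'g set \<Rightarrow> 'm set" where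
  "hatM G M I \<sigma> = {m \<in> M. extent G M I {m} = \<sigma>}"

definition fscale :: "real \<Rightarrow> ('a \<Rightarrow> real) \<Rightarrow> ('a \<Rightarrow> real)" where
  "fscale c f = (\<lambda>x. c * f x)"

(* A cochain is represented as a function \<delta> with \<delta>(\<sigma>,m) the coefficient of the
   basis element m \<in> \<sigma>' in the \<sigma>-component; it vanishes outside these pairs. *)
definition cochains :: "'g set \<Rightarrow> 'm set \<Rightarrow> ('g \<times> 'm) set \<Rightarrow> nat \<Rightarrow> ('g set \<times> 'm \<Rightarrow> real) set" where
  "cochains G M I k = {\<delta>. \<forall>\<sigma> m. \<delta> (\<sigma>, m) \<noteq> 0 \<longrightarrow> \<sigma> \<in> simplices G M I k \<and> m \<in> intent G M I \<sigma>}"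

definition face :: "'g::linorder set \<Rightarrow> nat \<Rightarrow> 'g set" where
  "face \<tau> i = \<tau> - {sorted_list_of_set \<tau> ! i}"

(* coboundary d^k : C^k \<rightarrow> C^{k+1};
   (d^k \<delta>)(\<tau>) = \<Sum>_{i=0}^{k+1} (-1)^i S(\<tau>_i \<subseteq> \<tau>)(\<delta>(\<tau>_i)),
   and the projection S(\<tau>_i \<subseteq> \<tau>) keeps exactly the coordinates m \<in> \<tau>'. *)
definition coboundary :: "'g::linorder set \<Rightarrow> 'm set \<Rightarrow> ('g \<times> 'm) set \<Rightarrow> nat
    \<Rightarrow> ('g set \<times> 'm \<Rightarrow> real) \<Rightarrow> ('g set \<times> 'm \<Rightarrow> real)" where
  "coboundary G M I k \<delta> = (\<lambda>(\<tau>, m).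
     if \<tau> \<in> simplices G M I (Suc k) \<and> m \<in> intent G M I \<tau>
     then (\<Sum>i = 0..Suc k. (-1) ^ i * \<delta> (face \<tau> i, m))
     else 0)"

definition cocycles :: "'g::linorder set \<Rightarrow> 'm set \<Rightarrow> ('g \<times> 'm) set \<Rightarrow> nat \<Rightarrow> ('g set \<times> 'm \<Rightarrow> real) set" where
  "cocycles G M I k = {\<delta> \<in> cochains G M I k. coboundary G M I k \<delta> = 0}"

definition coboundaries :: "'g::linorder set \<Rightarrow> 'm set \<Rightarrow> ('g \<times> 'm) set \<Rightarrow> nat \<Rightarrow> ('g set \<times> 'm \<Rightarrow> real) set" where
  "coboundaries G M I k =
     (case k of 0 \<Rightarrow> {0} | Suc j \<Rightarrow> coboundary G M I j ` cochains G M I j)"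

(* The direct sum \<Oplus>_{\<sigma> \<in> D} span \<widehat>{M_\<sigma>}, realised as functions on pairs (\<sigma>,m)
   with m \<in> \<widehat>{M_\<sigma>} (basis of the \<sigma>-summand) *)
definition hat_sum :: "'g set \<Rightarrow> 'm set \<Rightarrow> ('g \<times> 'm) set \<Rightarrow> ('g set \<times> 'm \<Rightarrow> real) set" where
  "hat_sum G M I = {f. \<forall>\<sigma> m. f (\<sigma>, m) \<noteq> 0 \<longrightarrow> \<sigma> \<in> dowker G M I \<and> m \<in> hatM G M I \<sigma>}"

end

theory Submission
  imports Defs
begin

text \<open>The Dowker sheaf splits along the attributes: the basis vector m lives exactly on the
  simplices \<sigma> \<subseteq> m', and every nonempty subset of m' is a simplex. So, for each m, the
  sheaf is the constant sheaf on the full simplex m', whose cochain complex is contracted by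
  coning from the least vertex of m'. Hence the higher cohomology vanishes, and a 0-cocycle
  amounts to one real number per attribute m, its constant value on the vertices of m'; this
  number is the coordinate of m in the summand of \<sigma> = m'.\<close>

lemma card_less_nth_sorted:
  fixes xs :: "'a::linorder list"
  assumes "sorted_wrt (<) xs" "i < length xs"
  shows "card {y \<in> set xs. y < xs ! i} = i"
proof -
  have "{y \<in> set xs. y < xs ! i} = (!) xs ` {..<i}"
  proof (intro equalityI subsetI)
    fix y assume "y \<in> {y \<in> set xs. y < xs ! i}"
    then obtain j where j: "j < length xs" "y = xs ! j" "xs ! j < xs ! i"
      by (auto simp: in_set_conv_nth)
    then have "j < i"
      using sorted_wrt_nth_less[OF assms(1), of i j] by (cases i j rule: linorder_cases) auto
    then show "y \<in> (!) xs ` {..<i}" using j by auto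
  next
    fix y assume "y \<in> (!) xs ` {..<i}"
    then show "y \<in> {y \<in> set xs. y < xs ! i}"
      using assms sorted_wrt_nth_less[OF assms(1), of _ i] by auto
  qed
  moreover have "inj_on ((!) xs) {..<i}"
    using assms strict_sorted_iff[of xs] by (auto intro!: inj_onI simp: nth_eq_iff_index_eq)
  ultimately show ?thesis by (simp add: card_image)
qed

lemma sum_offdiag_antisym_eq_0:
  fixes F :: "'a \<Rightarrow> 'a \<Rightarrow> 'b::linordered_idom"
  assumes "finite A" "\<And>x y. x \<in> A \<Longrightarrow> y \<in> A \<Longrightarrow> x \<noteq> y \<Longrightarrow> F x y = - F y x"
  shows "(\<Sum>x\<in>A. \<Sum>y\<in>A - {x}. F x y) = 0"
proof -
  let ?D = "SIGMA x:A. A - {x}"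
  have "(\<Sum>(x, y)\<in>?D. F x y) = (\<Sum>(x, y)\<in>?D. F y x)"
    by (rule sum.reindex_bij_witness[of _ prod.swap prod.swap]) auto
  also have "\<dots> = - (\<Sum>(x, y)\<in>?D. F x y)"
    using assms(2) by (auto simp: sum_negf[symmetric] intro!: sum.cong)
  finally have "(\<Sum>(x, y)\<in>?D. F x y) = 0" by simp
  then show ?thesis using assms(1) by (simp add: sum.Sigma)
qed

lemma sum_apply: "(\<Sum>i\<in>A. f i) x = (\<Sum>i\<in>A. f i x)"
  by (induction A rule: infinite_finite_induct) auto

lemma vector_space_fscale: "vector_space (fscale :: real \<Rightarrow> ('a \<Rightarrow> real) \<Rightarrow> _)"
  by unfold_locales (auto simp: fscale_def fun_eq_iff algebra_simps)

lemma subspace_functions_supported_on: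
  "module.subspace fscale {f :: 'a \<Rightarrow> real. \<forall>x. f x \<noteq> 0 \<longrightarrow> x \<in> S}"
proof -
  interpret V: vector_space "fscale :: real \<Rightarrow> ('a \<Rightarrow> real) \<Rightarrow> _" by (rule vector_space_fscale)
  show ?thesis unfolding V.subspace_def by (force simp: fscale_def)
qed

lemma dim_functions_supported_on:
  assumes "finite S"
  shows "vector_space.dim fscale {f :: 'a \<Rightarrow> real. \<forall>x. f x \<noteq> 0 \<longrightarrow> x \<in> S} = card S"
proof -
  interpret V: vector_space "fscale :: real \<Rightarrow> ('a \<Rightarrow> real) \<Rightarrow> _" by (rule vector_space_fscale)
  define e :: "'a \<Rightarrow> 'a \<Rightarrow> real" where "e x = (\<lambda>y. if y = x then 1 else 0)" for x
  have e_eval: "(\<Sum>x\<in>S. fscale (c x) (e x)) y = (if y \<in> S then c y else 0)" for c y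
    using assms by (simp add: sum_apply fscale_def e_def if_distrib cong: if_cong)
  have inj: "inj_on e S" by (rule inj_onI) (metis e_def zero_neq_one)
  show ?thesis
  proof (rule V.dim_unique[of "e ` S"])
    show "e ` S \<subseteq> {f. \<forall>x. f x \<noteq> 0 \<longrightarrow> x \<in> S}" by (auto simp: e_def split: if_splits)
    show "{f. \<forall>x. f x \<noteq> 0 \<longrightarrow> x \<in> S} \<subseteq> V.span (e ` S)"
    proof
      fix f :: "'a \<Rightarrow> real" assume "f \<in> {f. \<forall>x. f x \<noteq> 0 \<longrightarrow> x \<in> S}"
      then have "f = (\<Sum>x\<in>S. fscale (f x) (e x))" by (auto simp: fun_eq_iff e_eval)
      also have "\<dots> \<in> V.span (e ` S)" by (intro V.span_sum V.span_scale V.span_base) auto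
      finally show "f \<in> V.span (e ` S)" .
    qed
    show "V.independent (e ` S)"
    proof (rule V.independent_if_scalars_zero)
      fix c v assume sum: "(\<Sum>v\<in>e ` S. fscale (c v) v) = 0" and "v \<in> e ` S"
      then obtain x where x: "x \<in> S" "v = e x" by blast
      have "(\<Sum>y\<in>S. fscale (c (e y)) (e y)) = 0" using sum by (simp add: sum.reindex[OF inj])
      then show "c v = 0" using e_eval[of "c \<circ> e" x] x by simp
    qed (use assms in simp)
    show "card (e ` S) = card S" by (rule card_image[OF inj])
  qed
qed

lemma (in vector_space_pair) dim_image_eq_of_inj_on_span:
  assumes "Vector_Spaces.linear s1 s2 f" "inj_on f (vs1.span S)"
  shows "vs2.dim (f ` S) = vs1.dim S"
proof -
  obtain B where B: "B \<subseteq> S" "vs1.independent B" "S \<subseteq> vs1.span B" "card B = vs1.dim S"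
    by (rule vs1.basis_exists)
  then have span: "vs1.span B = vs1.span S"
    by (metis subset_antisym vs1.span_mono vs1.span_span)
  have "vs2.independent (f ` B)"
    using linear_independent_injective_image[OF assms(1) B(2)] assms(2) span by simp
  moreover have "vs2.span (f ` B) = vs2.span (f ` S)"
    using linear_span_image[OF assms(1)] span by simp
  moreover have "card (f ` B) = card B"
    using assms(2) B(1) vs1.span_superset by (metis card_image inj_on_subset subset_trans)
  ultimately show ?thesis using B(4) vs2.dim_eq_card by metis
qed

section \<open>Vertex signs and the coboundary\<close>

definition vertex_sign :: "'a::linorder set \<Rightarrow> 'a \<Rightarrow> real" where
  "vertex_sign \<tau> x = (-1) ^ card {y \<in> \<tau>. y < x}"

lemma sum_faces_eq_sum_vertex_sign:
  fixes \<tau> :: "'a::linorder set"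
  assumes "finite \<tau>" "card \<tau> = Suc n"
  shows "(\<Sum>i = 0..n. (-1) ^ i * f (face \<tau> i)) = (\<Sum>x\<in>\<tau>. vertex_sign \<tau> x * f (\<tau> - {x}))"
proof -
  define xs where "xs = sorted_list_of_set \<tau>"
  have xs: "sorted_wrt (<) xs" "distinct xs" "set xs = \<tau>" "length xs = Suc n"
    using assms by (auto simp: xs_def)
  have "(\<Sum>x\<in>\<tau>. vertex_sign \<tau> x * f (\<tau> - {x}))
      = (\<Sum>i<length xs. vertex_sign \<tau> (xs ! i) * f (\<tau> - {xs ! i}))"
    using sum.reindex_bij_betw[OF bij_betw_nth[OF xs(2) refl xs(3)[symmetric]],
        of "\<lambda>x. vertex_sign \<tau> x * f (\<tau> - {x})"]
    by simp
  also have "\<dots> = (\<Sum>i = 0..n. (-1) ^ i * f (face \<tau> i))"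
    using card_less_nth_sorted[OF xs(1)] xs(3,4)
    by (intro sum.cong) (auto simp: vertex_sign_def face_def xs_def)
  finally show ?thesis by simp
qed

lemma vertex_sign_least:
  assumes "\<And>y. y \<in> \<tau> \<Longrightarrow> v \<le> y"
  shows "vertex_sign \<tau> v = 1"
proof -
  have "{y \<in> \<tau>. y < v} = {}" using assms by force
  then show ?thesis by (simp only: vertex_sign_def) simp
qed

lemma vertex_sign_remove:
  assumes "finite \<tau>" "x \<in> \<tau>" "y \<noteq> x"
  shows "vertex_sign (\<tau> - {x}) y = (if x < y then - vertex_sign \<tau> y else vertex_sign \<tau> y)"
proof (cases "x < y")
  case True
  then have "{z \<in> \<tau>. z < y} = insert x {z \<in> \<tau> - {x}. z < y}" using assms(2) by auto
  then show ?thesis using True assms(1) by (simp add: vertex_sign_def)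
next
  case False
  then have "{z \<in> \<tau> - {x}. z < y} = {z \<in> \<tau>. z < y}" using assms(3) by auto
  then show ?thesis using False by (simp add: vertex_sign_def)
qed

lemma vertex_sign_remove_swap:
  assumes "finite \<tau>" "x \<in> \<tau>" "y \<in> \<tau>" "x \<noteq> y"
  shows "vertex_sign \<tau> x * vertex_sign (\<tau> - {x}) y = - (vertex_sign \<tau> y * vertex_sign (\<tau> - {y}) x)"
  using assms vertex_sign_remove[OF assms(1,2), of y] vertex_sign_remove[OF assms(1,3), of x]
  by auto

lemma intent_antimono: "A \<subseteq> B \<Longrightarrow> intent G M I B \<subseteq> intent G M I A"
  by (auto simp: intent_def)

lemma simplices_finite: "\<tau> \<in> simplices G M I k \<Longrightarrow> finite \<tau>"
  by (auto simp: simplices_def intro: card_ge_0_finite)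

lemma simplices_card: "\<tau> \<in> simplices G M I k \<Longrightarrow> card \<tau> = Suc k"
  by (simp add: simplices_def)

lemma face_in_simplices:
  assumes "\<tau> \<in> simplices G M I (Suc k)" "m \<in> intent G M I \<tau>" "x \<in> \<tau>"
  shows "\<tau> - {x} \<in> simplices G M I k" "m \<in> intent G M I (\<tau> - {x})"
proof -
  have card: "card (\<tau> - {x}) = Suc k"
    using assms(1,3) simplices_finite simplices_card by fastforce
  then have "\<tau> - {x} \<noteq> {}" by (metis card.empty nat.distinct(1))
  then show "\<tau> - {x} \<in> simplices G M I k"
    using assms(1) card intent_antimono[of "\<tau> - {x}" \<tau> G M I]
    by (auto simp: simplices_def dowker_def)
  show "m \<in> intent G M I (\<tau> - {x})" using assms(2) intent_antimono[of "\<tau> - {x}" \<tau> G M I] by auto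
qed

lemma insert_vertex_in_simplices:
  assumes "\<tau> \<in> simplices G M I k" "m \<in> intent G M I \<tau>" "v \<in> extent G M I {m}" "v \<notin> \<tau>"
  shows "insert v \<tau> \<in> simplices G M I (Suc k)" "m \<in> intent G M I (insert v \<tau>)"
proof -
  show m: "m \<in> intent G M I (insert v \<tau>)"
    using assms(2,3) by (auto simp: intent_def extent_def)
  show "insert v \<tau> \<in> simplices G M I (Suc k)"
    using assms m simplices_finite[OF assms(1)]
    by (auto simp: simplices_def dowker_def extent_def)
qed

lemma coboundary_eq_sum_vertex_sign:
  assumes "\<tau> \<in> simplices G M I (Suc k)" "m \<in> intent G M I \<tau>"
  shows "coboundary G M I k \<delta> (\<tau>, m) = (\<Sum>x\<in>\<tau>. vertex_sign \<tau> x * \<delta> (\<tau> - {x}, m))"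
  using assms sum_faces_eq_sum_vertex_sign[of \<tau> "Suc k" "\<lambda>\<sigma>. \<delta> (\<sigma>, m)"]
    simplices_finite[OF assms(1)] simplices_card[OF assms(1)]
  by (simp add: coboundary_def)

lemma coboundary_outside:
  assumes "\<not> (\<tau> \<in> simplices G M I (Suc k) \<and> m \<in> intent G M I \<tau>)"
  shows "coboundary G M I k \<delta> (\<tau>, m) = 0"
  unfolding coboundary_def prod.case if_not_P[OF assms] ..

lemma coboundary_in_cochains: "coboundary G M I k \<delta> \<in> cochains G M I (Suc k)"
  by (auto simp: cochains_def coboundary_def)

lemma coboundary_coboundary: "coboundary G M I (Suc k) (coboundary G M I k \<gamma>) = 0"
proof (rule ext, clarify)
  fix \<tau> m
  show "coboundary G M I (Suc k) (coboundary G M I k \<gamma>) (\<tau>, m) = 0 (\<tau>, m)"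
  proof (cases "\<tau> \<in> simplices G M I (Suc (Suc k)) \<and> m \<in> intent G M I \<tau>")
    case False
    then show ?thesis by (simp add: coboundary_outside)
  next
    case True
    then have fin: "finite \<tau>" by (blast intro: simplices_finite)
    have "coboundary G M I (Suc k) (coboundary G M I k \<gamma>) (\<tau>, m)
        = (\<Sum>x\<in>\<tau>. \<Sum>y\<in>\<tau> - {x}.
             vertex_sign \<tau> x * vertex_sign (\<tau> - {x}) y * \<gamma> (\<tau> - {x} - {y}, m))"
      using True face_in_simplices[of \<tau> G M I "Suc k" m]
      by (simp add: coboundary_eq_sum_vertex_sign sum_distrib_left mult.assoc)
    also have "\<dots> = 0"
    proof (rule sum_offdiag_antisym_eq_0[OF fin])
      fix x y assume "x \<in> \<tau>" "y \<in> \<tau>" "x \<noteq> y"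
      moreover have "\<tau> - {x} - {y} = \<tau> - {y} - {x}" by auto
      ultimately show "vertex_sign \<tau> x * vertex_sign (\<tau> - {x}) y * \<gamma> (\<tau> - {x} - {y}, m) =
          - (vertex_sign \<tau> y * vertex_sign (\<tau> - {y}) x * \<gamma> (\<tau> - {y} - {x}, m))"
        using vertex_sign_remove_swap[OF fin, of x y] by simp
    qed
    finally show ?thesis by simp
  qed
qed

section \<open>Vanishing of higher cohomology\<close>

definition cone_point :: "'g::linorder set \<Rightarrow> 'm set \<Rightarrow> ('g \<times> 'm) set \<Rightarrow> 'm \<Rightarrow> 'g" where
  "cone_point G M I m = Min (extent G M I {m})"

text \<open>For a fixed attribute m the simplices carrying m are exactly the nonempty subsets of m',
  so coning from the least vertex of m' contracts the cochain complex.\<close>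

definition cone_cochain :: "'g::linorder set \<Rightarrow> 'm set \<Rightarrow> ('g \<times> 'm) set \<Rightarrow> nat
    \<Rightarrow> ('g set \<times> 'm \<Rightarrow> real) \<Rightarrow> ('g set \<times> 'm \<Rightarrow> real)" where
  "cone_cochain G M I k \<delta> = (\<lambda>(\<sigma>, m).
     if \<sigma> \<in> simplices G M I k \<and> m \<in> intent G M I \<sigma> \<and> cone_point G M I m \<notin> \<sigma>
     then \<delta> (insert (cone_point G M I m) \<sigma>, m) else 0)"

lemma cone_point_least:
  assumes "finite G" "g \<in> extent G M I {m}"
  shows "cone_point G M I m \<in> extent G M I {m}" "cone_point G M I m \<le> g"
proof -
  have "finite (extent G M I {m})" using assms(1) by (simp add: extent_def)
  then show "cone_point G M I m \<in> extent G M I {m}" "cone_point G M I m \<le> g"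
    using assms(2) by (auto simp: cone_point_def intro: Min_in)
qed

lemma simplex_subset_extent:
  "\<tau> \<in> simplices G M I k \<Longrightarrow> m \<in> intent G M I \<tau> \<Longrightarrow> \<tau> \<subseteq> extent G M I {m}"
  by (auto simp: simplices_def dowker_def intent_def extent_def)

lemma coboundary_cone_cochain_of_cone_point_mem:
  assumes "\<tau> \<in> simplices G M I (Suc k)" "m \<in> intent G M I \<tau>" "cone_point G M I m \<in> \<tau>"
    and "finite G"
  shows "coboundary G M I k (cone_cochain G M I k \<delta>) (\<tau>, m) = \<delta> (\<tau>, m)"
proof -
  let ?v = "cone_point G M I m"
  have sub: "\<tau> \<subseteq> extent G M I {m}" using assms(1,2) by (rule simplex_subset_extent)
  have split: "coboundary G M I k (cone_cochain G M I k \<delta>) (\<tau>, m)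
      = vertex_sign \<tau> ?v * cone_cochain G M I k \<delta> (\<tau> - {?v}, m)
      + (\<Sum>x\<in>\<tau> - {?v}. vertex_sign \<tau> x * cone_cochain G M I k \<delta> (\<tau> - {x}, m))"
    unfolding coboundary_eq_sum_vertex_sign[OF assms(1,2)]
    by (rule sum.remove[OF simplices_finite[OF assms(1)] assms(3)])
  have rest: "(\<Sum>x\<in>\<tau> - {?v}. vertex_sign \<tau> x * cone_cochain G M I k \<delta> (\<tau> - {x}, m)) = 0"
  proof (rule sum.neutral, rule ballI)
    fix x assume "x \<in> \<tau> - {?v}"
    then have "?v \<in> \<tau> - {x}" using assms(3) by blast
    then show "vertex_sign \<tau> x * cone_cochain G M I k \<delta> (\<tau> - {x}, m) = 0" by (simp add: cone_cochain_def)
  qed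
  have sign: "vertex_sign \<tau> ?v = 1"
    using sub by (intro vertex_sign_least cone_point_least(2)[OF assms(4)]) blast
  have "insert ?v (\<tau> - {?v}) = \<tau>" using assms(3) by blast
  then have "cone_cochain G M I k \<delta> (\<tau> - {?v}, m) = \<delta> (\<tau>, m)"
    using face_in_simplices[OF assms(1,2,3)] by (simp add: cone_cochain_def)
  then show ?thesis using split rest sign by simp
qed

lemma coboundary_cone_cochain_of_cone_point_not_mem:
  assumes "\<tau> \<in> simplices G M I (Suc k)" "m \<in> intent G M I \<tau>" "cone_point G M I m \<notin> \<tau>"
    and "finite G"
  shows "coboundary G M I k (cone_cochain G M I k \<delta>) (\<tau>, m)
    + coboundary G M I (Suc k) \<delta> (insert (cone_point G M I m) \<tau>, m) = \<delta> (\<tau>, m)"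
proof -
  let ?v = "cone_point G M I m" and ?\<tau> = "insert (cone_point G M I m) \<tau>"
  have fin: "finite \<tau>" using assms(1) by (rule simplices_finite)
  have sub: "\<tau> \<subseteq> extent G M I {m}" using assms(1,2) by (rule simplex_subset_extent)
  obtain g where "g \<in> \<tau>" using simplices_card[OF assms(1)] by fastforce
  then have v: "?v \<in> extent G M I {m}" using sub by (intro cone_point_least(1)[OF assms(4)]) blast
  have less: "?v < x" if "x \<in> \<tau>" for x
  proof -
    have "?v \<le> x" using that sub by (intro cone_point_least(2)[OF assms(4)]) blast
    moreover have "?v \<noteq> x" using that assms(3) by blast
    ultimately show ?thesis by simp
  qed
  have remove_v: "?\<tau> - {?v} = \<tau>" using assms(3) by simp
  have \<tau>: "?\<tau> \<in> simplices G M I (Suc (Suc k))" "m \<in> intent G M I ?\<tau>"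
    using insert_vertex_in_simplices[OF assms(1,2) v assms(3)] by auto
  have sign: "vertex_sign ?\<tau> x = - vertex_sign \<tau> x" if "x \<in> \<tau>" for x
    using vertex_sign_remove[of ?\<tau> ?v x] fin that less[OF that] by (simp add: remove_v)
  have "coboundary G M I (Suc k) \<delta> (?\<tau>, m) = (\<Sum>x\<in>?\<tau>. vertex_sign ?\<tau> x * \<delta> (?\<tau> - {x}, m))"
    using \<tau> by (rule coboundary_eq_sum_vertex_sign)
  also have "\<dots> = vertex_sign ?\<tau> ?v * \<delta> (\<tau>, m) + (\<Sum>x\<in>\<tau>. vertex_sign ?\<tau> x * \<delta> (?\<tau> - {x}, m))"
    by (simp only: sum.insert[OF fin assms(3)] remove_v)
  also have "vertex_sign ?\<tau> ?v = 1"
    using less by (intro vertex_sign_least) (auto simp: less_imp_le)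
  also have "(\<Sum>x\<in>\<tau>. vertex_sign ?\<tau> x * \<delta> (?\<tau> - {x}, m))
      = - (\<Sum>x\<in>\<tau>. vertex_sign \<tau> x * cone_cochain G M I k \<delta> (\<tau> - {x}, m))"
    unfolding sum_negf[symmetric]
  proof (rule sum.cong[OF refl])
    fix x assume x: "x \<in> \<tau>"
    have "?\<tau> - {x} = insert ?v (\<tau> - {x})" using less[OF x] by auto
    then show "vertex_sign ?\<tau> x * \<delta> (?\<tau> - {x}, m) = - (vertex_sign \<tau> x * cone_cochain G M I k \<delta> (\<tau> - {x}, m))"
      using face_in_simplices[OF assms(1,2) x] assms(3) sign[OF x] by (simp add: cone_cochain_def)
  qed
  also have "(\<Sum>x\<in>\<tau>. vertex_sign \<tau> x * cone_cochain G M I k \<delta> (\<tau> - {x}, m))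
      = coboundary G M I k (cone_cochain G M I k \<delta>) (\<tau>, m)"
    using assms(1,2) by (rule coboundary_eq_sum_vertex_sign[symmetric])
  finally show ?thesis by simp
qed

lemma cone_cochain_in_cochains: "cone_cochain G M I k \<delta> \<in> cochains G M I k"
  by (auto simp: cochains_def cone_cochain_def)

lemma cone_cochain_chain_homotopy:
  assumes "finite G" "\<delta> \<in> cochains G M I (Suc k)"
  shows "coboundary G M I k (cone_cochain G M I k \<delta>) + cone_cochain G M I (Suc k) (coboundary G M I (Suc k) \<delta>) = \<delta>"
proof (rule ext, clarify)
  fix \<tau> m
  show "(coboundary G M I k (cone_cochain G M I k \<delta>) + cone_cochain G M I (Suc k) (coboundary G M I (Suc k) \<delta>)) (\<tau>, m)
      = \<delta> (\<tau>, m)"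
  proof (cases "\<tau> \<in> simplices G M I (Suc k) \<and> m \<in> intent G M I \<tau>")
    case False
    then have "\<delta> (\<tau>, m) = 0" using assms(2) by (auto simp: cochains_def)
    then show ?thesis using False by (auto simp: coboundary_outside cone_cochain_def)
  next
    case True
    then show ?thesis
      using coboundary_cone_cochain_of_cone_point_mem[of \<tau> G M I k m, OF _ _ _ assms(1)]
        coboundary_cone_cochain_of_cone_point_not_mem[of \<tau> G M I k m, OF _ _ _ assms(1)]
      by (cases "cone_point G M I m \<in> \<tau>") (auto simp: cone_cochain_def)
  qed
qed

lemma cocycles_eq_coboundaries:
  assumes "finite G" "0 < k"
  shows "cocycles G M I k = coboundaries G M I k"
proof -
  obtain j where k: "k = Suc j" using assms(2) by (cases k) auto
  have "\<delta> \<in> coboundary G M I j ` cochains G M I j" if "\<delta> \<in> cocycles G M I (Suc j)" for \<delta>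
  proof -
    have \<delta>: "\<delta> \<in> cochains G M I (Suc j)" "coboundary G M I (Suc j) \<delta> = 0"
      using that by (auto simp: cocycles_def)
    have "cone_cochain G M I (Suc j) 0 = 0" by (auto simp: cone_cochain_def)
    then have "\<delta> = coboundary G M I j (cone_cochain G M I j \<delta>)"
      using cone_cochain_chain_homotopy[OF assms(1) \<delta>(1)] \<delta>(2) by simp
    then show ?thesis using cone_cochain_in_cochains by blast
  qed
  then show ?thesis
    by (auto simp: k cocycles_def coboundaries_def coboundary_in_cochains coboundary_coboundary)
qed

section \<open>Zeroth cohomology\<close>

lemma simplices0_intent_iff:
  assumes "I \<subseteq> G \<times> M"
  shows "\<sigma> \<in> simplices G M I 0 \<and> m \<in> intent G M I \<sigma> \<longleftrightarrow> (\<exists>g. \<sigma> = {g} \<and> (g, m) \<in> I)"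
proof
  assume \<sigma>: "\<sigma> \<in> simplices G M I 0 \<and> m \<in> intent G M I \<sigma>"
  then obtain g where "\<sigma> = {g}" by (auto simp: simplices_def card_1_singleton_iff)
  then show "\<exists>g. \<sigma> = {g} \<and> (g, m) \<in> I" using \<sigma> by (auto simp: intent_def)
next
  assume "\<exists>g. \<sigma> = {g} \<and> (g, m) \<in> I"
  then show "\<sigma> \<in> simplices G M I 0 \<and> m \<in> intent G M I \<sigma>"
    using assms by (auto simp: simplices_def dowker_def intent_def)
qed

lemma coboundary0_edge:
  assumes "I \<subseteq> G \<times> M" "(a, m) \<in> I" "(b, m) \<in> I" "a < b"
  shows "coboundary G M I 0 \<delta> ({a, b}, m) = \<delta> ({b}, m) - \<delta> ({a}, m)"
proof -
  have edge: "{a, b} \<in> simplices G M I (Suc 0)" "m \<in> intent G M I {a, b}"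
    using assms by (auto simp: simplices_def dowker_def intent_def)
  have "vertex_sign {a, b} a = 1" using assms(4) by (intro vertex_sign_least) auto
  moreover have "{y \<in> {a, b}. y < b} = {a}" using assms(4) by auto
  then have "vertex_sign {a, b} b = -1" by (simp add: vertex_sign_def)
  ultimately show ?thesis
    using assms(4) by (simp add: coboundary_eq_sum_vertex_sign[OF edge] insert_Diff_if)
qed

lemma cocycles0_iff:
  assumes "I \<subseteq> G \<times> M"
  shows "\<delta> \<in> cocycles G M I 0 \<longleftrightarrow> \<delta> \<in> cochains G M I 0
    \<and> (\<forall>g h m. (g, m) \<in> I \<longrightarrow> (h, m) \<in> I \<longrightarrow> \<delta> ({g}, m) = \<delta> ({h}, m))"
proof (intro iffI conjI allI impI)
  fix g h m assume \<delta>: "\<delta> \<in> cocycles G M I 0" and "(g, m) \<in> I" "(h, m) \<in> I"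
  then have "a < b \<Longrightarrow> (a = g \<and> b = h) \<or> (a = h \<and> b = g) \<Longrightarrow> \<delta> ({a}, m) = \<delta> ({b}, m)" for a b
    using coboundary0_edge[OF assms, of a m b \<delta>] by (auto simp: cocycles_def)
  then show "\<delta> ({g}, m) = \<delta> ({h}, m)" by (cases g h rule: linorder_cases) force+
next
  assume \<delta>: "\<delta> \<in> cochains G M I 0
    \<and> (\<forall>g h m. (g, m) \<in> I \<longrightarrow> (h, m) \<in> I \<longrightarrow> \<delta> ({g}, m) = \<delta> ({h}, m))"
  have "coboundary G M I 0 \<delta> (\<tau>, m) = 0" for \<tau> m
  proof (cases "\<tau> \<in> simplices G M I (Suc 0) \<and> m \<in> intent G M I \<tau>")
    case False
    then show ?thesis by (rule coboundary_outside)
  next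
    case True
    obtain x y where xy: "\<tau> = {x, y}" "x \<noteq> y"
      using simplices_card[of \<tau> G M I "Suc 0"] True by (metis card_2_iff numeral_2_eq_2)
    then have \<tau>: "\<tau> = {min x y, max x y}" "min x y < max x y" by (auto simp: min_def max_def)
    have I: "(min x y, m) \<in> I" "(max x y, m) \<in> I"
      using True xy by (auto simp: intent_def min_def max_def)
    have "\<delta> ({max x y}, m) = \<delta> ({min x y}, m)" using \<delta> I by blast
    then show ?thesis using coboundary0_edge[OF assms I \<tau>(2), of \<delta>] by (simp add: \<tau>(1))
  qed
  then show "\<delta> \<in> cocycles G M I 0" using \<delta> by (auto simp: cocycles_def)
qed (auto simp: cocycles_def)

text \<open>Any vertex of m' could replace the cone point here, since 0-cocycles are constant on m'.\<close>

definition cocycle0_to_hat_sum :: "'g::linorder set \<Rightarrow> 'm set \<Rightarrow> ('g \<times> 'm) set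
    \<Rightarrow> ('g set \<times> 'm \<Rightarrow> real) \<Rightarrow> ('g set \<times> 'm \<Rightarrow> real)" where
  "cocycle0_to_hat_sum G M I \<delta> = (\<lambda>(\<sigma>, m).
     if m \<in> M \<and> \<sigma> = extent G M I {m} then \<delta> ({cone_point G M I m}, m) else 0)"

definition hat_sum_to_cocycle0 :: "'g set \<Rightarrow> 'm set \<Rightarrow> ('g \<times> 'm) set
    \<Rightarrow> ('g set \<times> 'm \<Rightarrow> real) \<Rightarrow> ('g set \<times> 'm \<Rightarrow> real)" where
  "hat_sum_to_cocycle0 G M I f = (\<lambda>(\<sigma>, m).
     if \<sigma> \<in> simplices G M I 0 \<and> m \<in> intent G M I \<sigma> then f (extent G M I {m}, m) else 0)"

lemma linear_cocycle0_to_hat_sum: "Vector_Spaces.linear fscale fscale (cocycle0_to_hat_sum G M I)"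
  unfolding Vector_Spaces.linear_iff
  by (auto simp: vector_space_fscale cocycle0_to_hat_sum_def fscale_def fun_eq_iff)

lemma linear_hat_sum_to_cocycle0: "Vector_Spaces.linear fscale fscale (hat_sum_to_cocycle0 G M I)"
  unfolding Vector_Spaces.linear_iff
  by (auto simp: vector_space_fscale hat_sum_to_cocycle0_def fscale_def fun_eq_iff)

lemma cocycle0_to_hat_sum_in_hat_sum:
  assumes "\<delta> \<in> cochains G M I 0"
  shows "cocycle0_to_hat_sum G M I \<delta> \<in> hat_sum G M I"
  unfolding hat_sum_def
proof (intro CollectI allI impI)
  fix \<sigma> m assume "cocycle0_to_hat_sum G M I \<delta> (\<sigma>, m) \<noteq> 0"
  then have m: "m \<in> M" "\<sigma> = extent G M I {m}" "\<delta> ({cone_point G M I m}, m) \<noteq> 0"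
    by (auto simp: cocycle0_to_hat_sum_def split: if_splits)
  then have "{cone_point G M I m} \<in> simplices G M I 0 \<and> m \<in> intent G M I {cone_point G M I m}"
    using assms unfolding cochains_def by blast
  then have "cone_point G M I m \<in> \<sigma>"
    using m(2) by (auto simp: simplices_def dowker_def intent_def extent_def)
  then show "\<sigma> \<in> dowker G M I \<and> m \<in> hatM G M I \<sigma>"
    using m by (auto simp: dowker_def hatM_def intent_def extent_def)
qed

lemma hat_sum_to_cocycle0_in_cocycles:
  assumes "I \<subseteq> G \<times> M"
  shows "hat_sum_to_cocycle0 G M I f \<in> cocycles G M I 0"
  unfolding cocycles0_iff[OF assms]
  using simplices0_intent_iff[OF assms]
  by (auto simp: cochains_def hat_sum_to_cocycle0_def)

lemma hat_sum_to_cocycle0_cocycle0_to_hat_sum: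
  assumes "finite G" "I \<subseteq> G \<times> M" "\<delta> \<in> cocycles G M I 0"
  shows "hat_sum_to_cocycle0 G M I (cocycle0_to_hat_sum G M I \<delta>) = \<delta>"
proof (rule ext, clarify)
  fix \<sigma> m
  have \<delta>: "\<delta> \<in> cochains G M I 0" "\<And>g h. (g, m) \<in> I \<Longrightarrow> (h, m) \<in> I \<Longrightarrow> \<delta> ({g}, m) = \<delta> ({h}, m)"
    using assms(3) unfolding cocycles0_iff[OF assms(2)] by blast+
  show "hat_sum_to_cocycle0 G M I (cocycle0_to_hat_sum G M I \<delta>) (\<sigma>, m) = \<delta> (\<sigma>, m)"
  proof (cases "\<sigma> \<in> simplices G M I 0 \<and> m \<in> intent G M I \<sigma>")
    case True
    then obtain g where g: "\<sigma> = {g}" "(g, m) \<in> I" using simplices0_intent_iff[OF assms(2)] by blast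
    then have "g \<in> extent G M I {m}" using assms(2) by (auto simp: extent_def)
    then have "cone_point G M I m \<in> extent G M I {m}" by (rule cone_point_least(1)[OF assms(1)])
    then have "(cone_point G M I m, m) \<in> I" by (simp add: extent_def)
    moreover have "m \<in> M" using g(2) assms(2) by blast
    ultimately show ?thesis
      using True g \<delta>(2)[of "cone_point G M I m" g]
      by (simp add: hat_sum_to_cocycle0_def cocycle0_to_hat_sum_def)
  next
    case False
    then show ?thesis using \<delta>(1) by (auto simp: hat_sum_to_cocycle0_def cochains_def)
  qed
qed

lemma cocycle0_to_hat_sum_hat_sum_to_cocycle0:
  assumes "finite G" "I \<subseteq> G \<times> M" "f \<in> hat_sum G M I"
  shows "cocycle0_to_hat_sum G M I (hat_sum_to_cocycle0 G M I f) = f"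
proof (rule ext, clarify)
  fix \<sigma> m
  have f: "f (\<sigma>, m) = 0" if "\<not> (m \<in> M \<and> \<sigma> = extent G M I {m} \<and> \<sigma> \<noteq> {})"
    using assms(3) that by (auto simp: hat_sum_def hatM_def dowker_def)
  show "cocycle0_to_hat_sum G M I (hat_sum_to_cocycle0 G M I f) (\<sigma>, m) = f (\<sigma>, m)"
  proof (cases "m \<in> M \<and> \<sigma> = extent G M I {m} \<and> \<sigma> \<noteq> {}")
    case True
    then obtain g where "g \<in> extent G M I {m}" by blast
    then have "cone_point G M I m \<in> extent G M I {m}" by (rule cone_point_least(1)[OF assms(1)])
    then have "{cone_point G M I m} \<in> simplices G M I 0 \<and> m \<in> intent G M I {cone_point G M I m}"
      using simplices0_intent_iff[OF assms(2)] by (auto simp: extent_def)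
    then show ?thesis
      using True by (simp add: hat_sum_to_cocycle0_def cocycle0_to_hat_sum_def)
  next
    case False
    have "cone_point G M I m \<in> extent G M I {m}"
      if "{cone_point G M I m} \<in> simplices G M I 0 \<and> m \<in> intent G M I {cone_point G M I m}"
      using that simplices0_intent_iff[OF assms(2)] assms(2) by (auto simp: extent_def)
    then show ?thesis
      using False f[OF False] by (auto simp: hat_sum_to_cocycle0_def cocycle0_to_hat_sum_def)
  qed
qed

lemma bij_betw_cocycle0_to_hat_sum:
  assumes "finite G" "I \<subseteq> G \<times> M"
  shows "bij_betw (cocycle0_to_hat_sum G M I) (cocycles G M I 0) (hat_sum G M I)"
    and "bij_betw (hat_sum_to_cocycle0 G M I) (hat_sum G M I) (cocycles G M I 0)"
proof -
  have maps_to: "cocycle0_to_hat_sum G M I ` cocycles G M I 0 \<subseteq> hat_sum G M I"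
    using cocycle0_to_hat_sum_in_hat_sum by (auto simp: cocycles_def)
  have maps_back: "hat_sum_to_cocycle0 G M I ` hat_sum G M I \<subseteq> cocycles G M I 0"
    using hat_sum_to_cocycle0_in_cocycles[OF assms(2)] by blast
  have left: "\<forall>\<delta>\<in>cocycles G M I 0. hat_sum_to_cocycle0 G M I (cocycle0_to_hat_sum G M I \<delta>) = \<delta>"
    using hat_sum_to_cocycle0_cocycle0_to_hat_sum[OF assms] by blast
  have right: "\<forall>f\<in>hat_sum G M I. cocycle0_to_hat_sum G M I (hat_sum_to_cocycle0 G M I f) = f"
    using cocycle0_to_hat_sum_hat_sum_to_cocycle0[OF assms] by blast
  show "bij_betw (cocycle0_to_hat_sum G M I) (cocycles G M I 0) (hat_sum G M I)"
    by (rule bij_betw_byWitness[OF left right maps_to maps_back])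
  show "bij_betw (hat_sum_to_cocycle0 G M I) (hat_sum G M I) (cocycles G M I 0)"
    by (rule bij_betw_byWitness[OF right left maps_back maps_to])
qed

lemma hat_sum_eq_supported_on:
  assumes "I \<subseteq> G \<times> M" "total_context G M I"
  shows "hat_sum G M I = {f. \<forall>p. f p \<noteq> 0 \<longrightarrow> p \<in> (\<lambda>m. (extent G M I {m}, m)) ` M}"
proof -
  have "\<sigma> \<in> dowker G M I \<and> m \<in> hatM G M I \<sigma> \<longleftrightarrow> (\<sigma>, m) \<in> (\<lambda>m. (extent G M I {m}, m)) ` M"
    for \<sigma> m
    using assms by (auto simp: dowker_def hatM_def total_context_def intent_def extent_def)
  then show ?thesis unfolding hat_sum_def by auto
qed

lemma dim_cocycles0:
  fixes G :: "'g::linorder set" and M :: "'m set"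
  assumes "finite G" "finite M" "I \<subseteq> G \<times> M" "total_context G M I"
  shows "vector_space.dim fscale (cocycles G M I 0) = card M"
proof -
  let ?V = "fscale :: real \<Rightarrow> ('g set \<times> 'm \<Rightarrow> real) \<Rightarrow> _"
  interpret V: vector_space_pair ?V ?V by (intro vector_space_pair.intro vector_space_fscale)
  let ?P = "(\<lambda>m. (extent G M I {m}, m)) ` M"
  have hat: "hat_sum G M I = {f. \<forall>p. f p \<noteq> 0 \<longrightarrow> p \<in> ?P}"
    by (rule hat_sum_eq_supported_on[OF assms(3,4)])
  then have "V.vs1.subspace (hat_sum G M I)"
    by (simp only: subspace_functions_supported_on)
  then have "inj_on (hat_sum_to_cocycle0 G M I) (V.vs1.span (hat_sum G M I))"
    using bij_betw_cocycle0_to_hat_sum(2)[OF assms(1,3)]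
    by (simp add: bij_betw_def V.vs1.span_eq_iff[THEN iffD2])
  then have "V.vs1.dim (hat_sum_to_cocycle0 G M I ` hat_sum G M I) = V.vs1.dim (hat_sum G M I)"
    by (rule V.dim_image_eq_of_inj_on_span[OF linear_hat_sum_to_cocycle0])
  moreover have "hat_sum_to_cocycle0 G M I ` hat_sum G M I = cocycles G M I 0"
    using bij_betw_cocycle0_to_hat_sum(2)[OF assms(1,3)] by (simp add: bij_betw_def)
  moreover have "card ?P = card M" by (rule card_image) (auto intro: inj_onI)
  ultimately show ?thesis
    using dim_functions_supported_on[of ?P] assms(2) hat by simp
qed

theorem mainTheorem4:
  fixes G :: "'g::linorder set" and M :: "'m set" and I :: "('g \<times> 'm) set"
  assumes "finite G" and "finite M" and "I \<subseteq> G \<times> M"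
    and "total_context G M I"
  shows "(\<exists>\<phi>. Vector_Spaces.linear fscale fscale \<phi> \<and>
             bij_betw \<phi> (cocycles G M I 0) (hat_sum G M I))
       \<and> vector_space.dim fscale (cocycles G M I 0) = card M
       \<and> (\<forall>k>0. cocycles G M I k = coboundaries G M I k)"
  using linear_cocycle0_to_hat_sum bij_betw_cocycle0_to_hat_sum(1)[OF assms(1,3)]
    dim_cocycles0[OF assms] cocycles_eq_coboundaries[OF assms(1)]
  by blast

end
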